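(* Let $(V,g)$ be a three-dimensional Lorentzian vector space (signature $(-,+,+)$) with a choice of time orientation, and let $F\in\mathrm{Skew}(V)$, $F\neq0$. Set $\sigma:=-\frac12\mathrm{Tr}(F^2)\in\mathbb{R}$. Then there exists an orthonormal basis $\{e_0,e_1,e_2\}$ of $V$ with $e_0$ timelike and future directed such that $$F(e_0)=\left(-1+\tfrac{\sigma}{4}\right)e_2,\quad F(e_1)=-\left(1+\tfrac{\sigma}{4}\right)e_2,\quad F(e_2)=\left(-1+\tfrac{\sigma}{4}\right)e_0+\left(1+\tfrac{\sigma}{4}\right)e_1.$$
   Context: $\mathrm{Skew}(V)$ denotes the set of endomorphisms $F:V\to V$ with $\langle e,F(e')\rangle=-\langle F(e),e'\rangle$ for all $e,e'\in V$, where $\langle\cdot,\cdot\rangle$ is the inner product of $g$. *)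

theory Defs
  imports "HOL-Analysis.Analysis"
begin

definition orthonormal_frame :: "(real^3 \<Rightarrow> real^3 \<Rightarrow> real) \<Rightarrow> real^3 \<Rightarrow> real^3 \<Rightarrow> real^3 \<Rightarrow> bool" where
  "orthonormal_frame g e0 e1 e2 \<longleftrightarrow>
     independent {e0, e1, e2} \<and> span {e0, e1, e2} = UNIV \<and> e0 \<noteq> e1 \<and> e0 \<noteq> e2 \<and> e1 \<noteq> e2 \<and>
     g e0 e0 = -1 \<and> g e1 e1 = 1 \<and> g e2 e2 = 1 \<and>
     g e0 e1 = 0 \<and> g e0 e2 = 0 \<and> g e1 e2 = 0"

definition lorentzian_metric :: "(real^3 \<Rightarrow> real^3 \<Rightarrow> real) \<Rightarrow> bool" where
  "lorentzian_metric g \<longleftrightarrow> bilinear g \<and> (\<forall>x y. g x y = g y x) \<and>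
     (\<exists>b0 b1 b2. orthonormal_frame g b0 b1 b2)"

text \<open>Time orientation: a fixed timelike vector tau; a timelike v is future directed iff g v tau < 0.\<close>
definition timelike :: "(real^3 \<Rightarrow> real^3 \<Rightarrow> real) \<Rightarrow> real^3 \<Rightarrow> bool" where
  "timelike g v \<longleftrightarrow> g v v < 0"

definition future_directed :: "(real^3 \<Rightarrow> real^3 \<Rightarrow> real) \<Rightarrow> real^3 \<Rightarrow> real^3 \<Rightarrow> bool" where
  "future_directed g tau v \<longleftrightarrow> timelike g v \<and> g v tau < 0"

definition Skew :: "(real^3 \<Rightarrow> real^3 \<Rightarrow> real) \<Rightarrow> (real^3 \<Rightarrow> real^3) set" where
  "Skew g = {F. linear F \<and> (\<forall>e e'. g e (F e') = - g (F e) e')}"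

definition trace_map :: "(real^3 \<Rightarrow> real^3) \<Rightarrow> real" where
  "trace_map f = trace (matrix f)"

end

(*
  In an orthonormal frame (e0, e1, e2) a g-skew map F is determined by the three numbers
  p = g (F e0) e1, q = g (F e0) e2, r = g (F e1) e2, and the trace of F o F gives
  sigma = r^2 - p^2 - q^2.  A rotation of (e1, e2) makes p = 0, and the sign of the new q = t
  can be chosen so that t + r is nonzero.  A boost in the (e0, e1)-plane multiplies t + r and
  t - r by reciprocal factors, so it brings the components to (0, -1 + sigma/4, -(1 + sigma/4)),
  which is the asserted normal form.  Reversing all three vectors fixes the time orientation
  and leaves the components unchanged.
*)
theory Submission
  imports Defs
begin

lemma exists_rotation_onto_axis:
  fixes p q r :: real
  assumes "p \<noteq> 0 \<or> q \<noteq> 0 \<or> r \<noteq> 0"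
  obtains co si t where "co\<^sup>2 + si\<^sup>2 = 1" "co * p + si * q = 0" "co * q - si * p = t" "t + r \<noteq> 0"
proof (cases "p = 0 \<and> q = 0")
  case True
  with assms that[of 1 0 0] show ?thesis by simp
next
  case False
  then have "p\<^sup>2 + q\<^sup>2 > 0"
    by (simp add: sum_power2_gt_zero_iff)
  define s where "s = sqrt (p\<^sup>2 + q\<^sup>2)"
  have "s > 0" and "s\<^sup>2 = p\<^sup>2 + q\<^sup>2"
    unfolding s_def using \<open>p\<^sup>2 + q\<^sup>2 > 0\<close> by simp_all
  define t where "t = (if r \<ge> 0 then s else - s)"
  have "t\<^sup>2 = p\<^sup>2 + q\<^sup>2" and "t + r \<noteq> 0"
    unfolding t_def using \<open>s > 0\<close> \<open>s\<^sup>2 = p\<^sup>2 + q\<^sup>2\<close> by auto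
  moreover have "t \<noteq> 0"
    using \<open>t\<^sup>2 = p\<^sup>2 + q\<^sup>2\<close> \<open>p\<^sup>2 + q\<^sup>2 > 0\<close> by auto
  ultimately show ?thesis
  proof (intro that[of "q / t" "- p / t" t])
    have "(q / t)\<^sup>2 + (- p / t)\<^sup>2 = (p\<^sup>2 + q\<^sup>2) / t\<^sup>2"
      by (simp add: power_divide add_divide_distrib)
    then show "(q / t)\<^sup>2 + (- p / t)\<^sup>2 = 1"
      using \<open>t\<^sup>2 = p\<^sup>2 + q\<^sup>2\<close> False by simp
    show "q / t * q - - p / t * p = t"
      using \<open>t\<^sup>2 = p\<^sup>2 + q\<^sup>2\<close> \<open>t \<noteq> 0\<close> by (simp add: field_simps power2_eq_square)
  qed (simp_all add: field_simps)
qed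

lemma exists_boost_to_normal_form:
  fixes t r :: real
  assumes "t + r \<noteq> 0"
  obtains ch sh where "ch\<^sup>2 - sh\<^sup>2 = 1" "ch * t + sh * r = -1 + (r\<^sup>2 - t\<^sup>2) / 4"
    "sh * t + ch * r = - (1 + (r\<^sup>2 - t\<^sup>2) / 4)"
proof
  define u where "u = t + r"
  define ch where "ch = - (1 / u + u / 4)"
  define sh where "sh = u / 4 - 1 / u"
  have "u \<noteq> 0"
    unfolding u_def using assms .
  have sum_eq: "ch + sh = -2 / u" and diff_eq: "ch - sh = - u / 2"
    unfolding ch_def sh_def by (simp_all add: algebra_simps)
  have "ch\<^sup>2 - sh\<^sup>2 = (ch + sh) * (ch - sh)"
    by (simp add: power2_eq_square algebra_simps)
  then show "ch\<^sup>2 - sh\<^sup>2 = 1"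
    using \<open>u \<noteq> 0\<close> unfolding sum_eq diff_eq by simp
  have scaled_sum: "(ch + sh) * (t + r) = -2"
    using \<open>u \<noteq> 0\<close> unfolding sum_eq u_def[symmetric] by simp
  have scaled_diff: "(ch - sh) * (t - r) = (r\<^sup>2 - t\<^sup>2) / 2"
    unfolding diff_eq u_def by (simp add: power2_eq_square algebra_simps)
  have "ch * t + sh * r = ((ch + sh) * (t + r) + (ch - sh) * (t - r)) / 2"
    by (simp add: algebra_simps)
  then show "ch * t + sh * r = -1 + (r\<^sup>2 - t\<^sup>2) / 4"
    unfolding scaled_sum scaled_diff by simp
  have "sh * t + ch * r = ((ch + sh) * (t + r) - (ch - sh) * (t - r)) / 2"
    by (simp add: algebra_simps)
  then show "sh * t + ch * r = - (1 + (r\<^sup>2 - t\<^sup>2) / 4)"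
    unfolding scaled_sum scaled_diff by simp
qed

locale symmetric_bilinear_form =
  fixes g :: "real^3 \<Rightarrow> real^3 \<Rightarrow> real"
  assumes bilinear: "bilinear g"
    and commute: "g x y = g y x"
begin

lemmas bilinear_simps =
  bilinear_ladd[OF bilinear] bilinear_radd[OF bilinear]
  bilinear_lsub[OF bilinear] bilinear_rsub[OF bilinear]
  bilinear_lmul[OF bilinear] bilinear_rmul[OF bilinear]
  bilinear_lneg[OF bilinear] bilinear_rneg[OF bilinear]
  bilinear_lzero[OF bilinear] bilinear_rzero[OF bilinear]

lemma orthonormal_frame_gram:
  assumes "orthonormal_frame g e0 e1 e2"
  shows "g e0 e0 = -1" "g e1 e1 = 1" "g e2 e2 = 1"
    "g e0 e1 = 0" "g e0 e2 = 0" "g e1 e2 = 0" "g e1 e0 = 0" "g e2 e0 = 0" "g e2 e1 = 0"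
  using assms commute unfolding orthonormal_frame_def by metis+

lemma orthonormal_frameI:
  assumes gram: "g e0 e0 = -1" "g e1 e1 = 1" "g e2 e2 = 1" "g e0 e1 = 0" "g e0 e2 = 0" "g e1 e2 = 0"
  shows "orthonormal_frame g e0 e1 e2"
proof -
  have gram': "g e1 e0 = 0" "g e2 e0 = 0" "g e2 e1 = 0"
    using gram commute by metis+
  have distinct: "e0 \<noteq> e1" "e0 \<noteq> e2" "e1 \<noteq> e2"
    using gram by auto
  have "independent {e0, e1, e2}"
  proof
    assume "dependent {e0, e1, e2}"
    then obtain u where u: "\<exists>v\<in>{e0, e1, e2}. u v \<noteq> 0" "(\<Sum>v\<in>{e0, e1, e2}. u v *\<^sub>R v) = 0"
      using real_vector.dependent_finite[of "{e0, e1, e2}"] by auto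
    then have "u e0 *\<^sub>R e0 + u e1 *\<^sub>R e1 + u e2 *\<^sub>R e2 = 0"
      using distinct by (simp add: add.assoc)
    then have "g (u e0 *\<^sub>R e0 + u e1 *\<^sub>R e1 + u e2 *\<^sub>R e2) e = 0" for e
      by (simp add: bilinear_simps)
    from this[of e0] this[of e1] this[of e2] have "u e0 = 0" "u e1 = 0" "u e2 = 0"
      using gram gram' by (simp_all add: bilinear_simps)
    with u(1) show False by auto
  qed
  moreover have "span {e0, e1, e2} = UNIV"
    using card_eq_dim[of "{e0, e1, e2}" UNIV] calculation distinct by auto
  ultimately show ?thesis
    unfolding orthonormal_frame_def using distinct gram by auto
qed

lemma orthonormal_frame_inner:
  assumes "orthonormal_frame g e0 e1 e2"
  shows "g (x0 *\<^sub>R e0 + x1 *\<^sub>R e1 + x2 *\<^sub>R e2) (y0 *\<^sub>R e0 + y1 *\<^sub>R e1 + y2 *\<^sub>R e2)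
    = - x0 * y0 + x1 * y1 + x2 * y2"
  using orthonormal_frame_gram[OF assms] by (simp add: bilinear_simps)

lemma orthonormal_frame_expansion:
  assumes frame: "orthonormal_frame g e0 e1 e2"
  shows "v = (- g v e0) *\<^sub>R e0 + g v e1 *\<^sub>R e1 + g v e2 *\<^sub>R e2"
proof -
  have "v \<in> span {e0, e1, e2}"
    using frame unfolding orthonormal_frame_def by auto
  then obtain u where "v = (\<Sum>w\<in>{e0, e1, e2}. u w *\<^sub>R w)"
    using real_vector.span_finite[of "{e0, e1, e2}"] by auto
  then have "v = u e0 *\<^sub>R e0 + u e1 *\<^sub>R e1 + u e2 *\<^sub>R e2"
    using frame unfolding orthonormal_frame_def by (simp add: add.assoc)
  then show ?thesis
    using orthonormal_frame_gram[OF frame] by (simp add: bilinear_simps)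
qed

lemma orthonormal_frame_quadratic:
  assumes "orthonormal_frame g e0 e1 e2"
  shows "g v v = - (g v e0)\<^sup>2 + (g v e1)\<^sup>2 + (g v e2)\<^sup>2"
proof -
  note expansion = orthonormal_frame_expansion[OF assms, of v]
  have "g v v = g ((- g v e0) *\<^sub>R e0 + g v e1 *\<^sub>R e1 + g v e2 *\<^sub>R e2)
      ((- g v e0) *\<^sub>R e0 + g v e1 *\<^sub>R e1 + g v e2 *\<^sub>R e2)"
    using arg_cong2[OF expansion expansion, of g] .
  then show ?thesis
    unfolding orthonormal_frame_inner[OF assms] by (simp add: power2_eq_square)
qed

lemma timelike_inner_frame_nonzero:
  assumes "orthonormal_frame g e0 e1 e2" and "timelike g v"
  shows "g e0 v \<noteq> 0"
proof
  assume "g e0 v = 0"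
  then have "g v v = (g v e1)\<^sup>2 + (g v e2)\<^sup>2"
    using orthonormal_frame_quadratic[OF assms(1), of v] commute[of e0 v] by simp
  then have "g v v \<ge> 0"
    by simp
  with assms(2) show False
    unfolding timelike_def by simp
qed

lemma orthonormal_frame_rotate:
  assumes "orthonormal_frame g e0 e1 e2" and "co\<^sup>2 + si\<^sup>2 = 1"
  shows "orthonormal_frame g e0 (co *\<^sub>R e1 + si *\<^sub>R e2) (co *\<^sub>R e2 - si *\<^sub>R e1)"
  using orthonormal_frame_gram[OF assms(1)] assms(2)
  by (intro orthonormal_frameI) (simp_all add: bilinear_simps algebra_simps power2_eq_square)

lemma orthonormal_frame_boost:
  assumes "orthonormal_frame g e0 e1 e2" and "ch\<^sup>2 - sh\<^sup>2 = 1"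
  shows "orthonormal_frame g (ch *\<^sub>R e0 + sh *\<^sub>R e1) (sh *\<^sub>R e0 + ch *\<^sub>R e1) e2"
  using orthonormal_frame_gram[OF assms(1)] assms(2)
  by (intro orthonormal_frameI) (simp_all add: bilinear_simps algebra_simps power2_eq_square)

lemma orthonormal_frame_neg:
  assumes "orthonormal_frame g e0 e1 e2"
  shows "orthonormal_frame g (- e0) (- e1) (- e2)"
  using orthonormal_frame_gram[OF assms] by (intro orthonormal_frameI) (simp_all add: bilinear_simps)

lemma trace_map_frame:
  assumes frame: "orthonormal_frame g e0 e1 e2" and "linear G"
  shows "trace_map G = - g (G e0) e0 + g (G e1) e1 + g (G e2) e2"
proof -
  define coords :: "real^3 \<Rightarrow> real^3" where "coords v = vector [- g v e0, g v e1, g v e2]" for v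
  define combine :: "real^3 \<Rightarrow> real^3" where "combine c = c$1 *\<^sub>R e0 + c$2 *\<^sub>R e1 + c$3 *\<^sub>R e2" for c
  have "linear coords"
    by (rule linearI) (simp_all add: coords_def vec_eq_iff forall_3 bilinear_simps)
  moreover have "linear combine"
    by (rule linearI) (simp_all add: combine_def algebra_simps)
  moreover have "G = combine \<circ> (coords \<circ> G)"
    using orthonormal_frame_expansion[OF frame] by (simp add: fun_eq_iff combine_def coords_def)
  ultimately have "trace (matrix G) = trace (matrix (coords \<circ> G) ** matrix combine)"
    using \<open>linear G\<close> by (metis linear_compose matrix_compose trace_mul_sym)
  also have "\<dots> = trace (matrix (coords \<circ> G \<circ> combine))"
    using \<open>linear G\<close> \<open>linear coords\<close> \<open>linear combine\<close> by (metis linear_compose matrix_compose)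
  also have "\<dots> = - g (G e0) e0 + g (G e1) e1 + g (G e2) e2"
    by (simp add: trace_def sum_3 matrix_def combine_def coords_def axis_def)
  finally show ?thesis
    unfolding trace_map_def .
qed

end

locale skew_operator = symmetric_bilinear_form +
  fixes F :: "real^3 \<Rightarrow> real^3"
  assumes skew: "F \<in> Skew g"
begin

lemma linear: "linear F"
  using skew unfolding Skew_def by simp

lemma adjoint: "g x (F y) = - g (F x) y"
  using skew unfolding Skew_def by simp

lemma inner_apply_self: "g (F v) v = 0"
  using adjoint[of v v] commute[of v "F v"] by simp

lemmas linear_simps = linear_add[OF linear] linear_diff[OF linear] linear_scale[OF linear]
  linear_neg[OF linear]

definition components :: "real^3 \<Rightarrow> real^3 \<Rightarrow> real^3 \<Rightarrow> real \<times> real \<times> real" where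
  "components e0 e1 e2 = (g (F e0) e1, g (F e0) e2, g (F e1) e2)"

lemma apply_frame:
  assumes frame: "orthonormal_frame g e0 e1 e2" and "components e0 e1 e2 = (p, q, r)"
  shows "F e0 = p *\<^sub>R e1 + q *\<^sub>R e2" "F e1 = p *\<^sub>R e0 + r *\<^sub>R e2" "F e2 = q *\<^sub>R e0 - r *\<^sub>R e1"
proof -
  have "g (F e0) e1 = p" "g (F e0) e2 = q" "g (F e1) e2 = r"
    using assms(2) unfolding components_def by auto
  moreover have "g (F e1) e0 = - p" "g (F e2) e0 = - q" "g (F e2) e1 = - r"
    using calculation adjoint commute by metis+
  ultimately show "F e0 = p *\<^sub>R e1 + q *\<^sub>R e2" "F e1 = p *\<^sub>R e0 + r *\<^sub>R e2"
    "F e2 = q *\<^sub>R e0 - r *\<^sub>R e1"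
    by (subst orthonormal_frame_expansion[OF frame], simp add: inner_apply_self)+
qed

lemma components_eq_0D:
  assumes frame: "orthonormal_frame g e0 e1 e2" and "components e0 e1 e2 = (0, 0, 0)"
  shows "F = (\<lambda>x. 0)"
proof
  fix v
  have "F v = F ((- g v e0) *\<^sub>R e0 + g v e1 *\<^sub>R e1 + g v e2 *\<^sub>R e2)"
    using orthonormal_frame_expansion[OF frame] by metis
  then show "F v = 0"
    using apply_frame[OF assms] by (simp add: linear_simps)
qed

lemma components_rotate:
  assumes "components e0 e1 e2 = (p, q, r)" and "co\<^sup>2 + si\<^sup>2 = 1"
  shows "components e0 (co *\<^sub>R e1 + si *\<^sub>R e2) (co *\<^sub>R e2 - si *\<^sub>R e1)
    = (co * p + si * q, co * q - si * p, r)"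
proof -
  have "g (F e2) e1 = - r"
    using assms(1) adjoint commute unfolding components_def by (metis prod.inject)
  then have "g (F (co *\<^sub>R e1 + si *\<^sub>R e2)) (co *\<^sub>R e2 - si *\<^sub>R e1) = (co\<^sup>2 + si\<^sup>2) * r"
    using assms(1) unfolding components_def
    by (simp add: linear_simps bilinear_simps inner_apply_self algebra_simps power2_eq_square)
  with assms show ?thesis
    unfolding components_def by (simp add: bilinear_simps algebra_simps)
qed

lemma components_boost:
  assumes "components e0 e1 e2 = (p, q, r)" and "ch\<^sup>2 - sh\<^sup>2 = 1"
  shows "components (ch *\<^sub>R e0 + sh *\<^sub>R e1) (sh *\<^sub>R e0 + ch *\<^sub>R e1) e2
    = (p, ch * q + sh * r, sh * q + ch * r)"
proof -
  have "g (F e1) e0 = - p"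
    using assms(1) adjoint commute unfolding components_def by (metis prod.inject)
  then have "g (F (ch *\<^sub>R e0 + sh *\<^sub>R e1)) (sh *\<^sub>R e0 + ch *\<^sub>R e1) = (ch\<^sup>2 - sh\<^sup>2) * p"
    using assms(1) unfolding components_def
    by (simp add: linear_simps bilinear_simps inner_apply_self algebra_simps power2_eq_square)
  with assms show ?thesis
    unfolding components_def by (simp add: linear_simps bilinear_simps algebra_simps)
qed

lemma components_neg: "components (- e0) (- e1) (- e2) = components e0 e1 e2"
  unfolding components_def by (simp add: linear_simps bilinear_simps)

lemma trace_map_square:
  assumes frame: "orthonormal_frame g e0 e1 e2" and "components e0 e1 e2 = (p, q, r)"
  shows "trace_map (F \<circ> F) = 2 * (p\<^sup>2 + q\<^sup>2 - r\<^sup>2)"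
proof -
  have "trace_map (F \<circ> F) = - g (F (F e0)) e0 + g (F (F e1)) e1 + g (F (F e2)) e2"
    using trace_map_frame[OF frame linear_compose[OF linear linear]] by simp
  also have "\<dots> = g (F e0) (F e0) - g (F e1) (F e1) - g (F e2) (F e2)"
    using adjoint[of "F v" v for v] by simp
  also have "\<dots> = 2 * (p\<^sup>2 + q\<^sup>2 - r\<^sup>2)"
    using orthonormal_frame_gram[OF frame]
    by (simp add: apply_frame[OF assms] bilinear_simps power2_eq_square)
  finally show ?thesis .
qed

lemma exists_frame_first_component_0:
  assumes "orthonormal_frame g e0 e1 e2" and "F \<noteq> (\<lambda>x. 0)"
  obtains f0 f1 f2 t r where "orthonormal_frame g f0 f1 f2"
    "components f0 f1 f2 = (0, t, r)" "t + r \<noteq> 0"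
proof -
  obtain p q r where pqr: "components e0 e1 e2 = (p, q, r)"
    using prod_cases3 by blast
  then have "p \<noteq> 0 \<or> q \<noteq> 0 \<or> r \<noteq> 0"
    using components_eq_0D[OF assms(1)] assms(2) by auto
  then obtain co si t where rot: "co\<^sup>2 + si\<^sup>2 = 1"
    and "co * p + si * q = 0" "co * q - si * p = t" "t + r \<noteq> 0"
    by (rule exists_rotation_onto_axis)
  with that[OF orthonormal_frame_rotate[OF assms(1) rot]] show ?thesis
    using components_rotate[OF pqr rot] by simp
qed

lemma exists_frame_components_normal_form:
  assumes "orthonormal_frame g e0 e1 e2" and "components e0 e1 e2 = (0, t, r)" and "t + r \<noteq> 0"
  obtains f0 f1 f2 where "orthonormal_frame g f0 f1 f2"
    "components f0 f1 f2 = (0, -1 + (r\<^sup>2 - t\<^sup>2) / 4, - (1 + (r\<^sup>2 - t\<^sup>2) / 4))"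
proof -
  obtain ch sh where boost: "ch\<^sup>2 - sh\<^sup>2 = 1"
    and "ch * t + sh * r = -1 + (r\<^sup>2 - t\<^sup>2) / 4" "sh * t + ch * r = - (1 + (r\<^sup>2 - t\<^sup>2) / 4)"
    using exists_boost_to_normal_form[OF assms(3)] by blast
  with that[OF orthonormal_frame_boost[OF assms(1) boost]] show ?thesis
    using components_boost[OF assms(2) boost] by simp
qed

lemma exists_future_directed_frame:
  assumes frame: "orthonormal_frame g e0 e1 e2" and "timelike g tau"
  obtains f0 f1 f2 where "orthonormal_frame g f0 f1 f2" "future_directed g tau f0"
    "components f0 f1 f2 = components e0 e1 e2"
proof (cases "g e0 tau < 0")
  case True
  with frame that show ?thesis
    using orthonormal_frame_gram(1)[OF frame] unfolding future_directed_def timelike_def by simp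
next
  case False
  then have "g (- e0) tau < 0"
    using timelike_inner_frame_nonzero[OF assms] commute[of e0 tau] by (simp add: bilinear_simps)
  with that show ?thesis
    using orthonormal_frame_neg[OF frame] orthonormal_frame_gram(1)[OF frame] components_neg
    unfolding future_directed_def timelike_def by (simp add: bilinear_simps)
qed

end

theorem corollary2p3:
  fixes g :: "real^3 \<Rightarrow> real^3 \<Rightarrow> real" and tau :: "real^3" and F :: "real^3 \<Rightarrow> real^3"
  assumes "lorentzian_metric g"
    and "timelike g tau"
    and "F \<in> Skew g" and "F \<noteq> (\<lambda>x. 0)"
  shows "let \<sigma> = - (1/2) * trace_map (F \<circ> F) in
    \<exists>e0 e1 e2. orthonormal_frame g e0 e1 e2 \<and> future_directed g tau e0 \<and>
      F e0 = (-1 + \<sigma>/4) *\<^sub>R e2 \<and>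
      F e1 = - ((1 + \<sigma>/4) *\<^sub>R e2) \<and>
      F e2 = (-1 + \<sigma>/4) *\<^sub>R e0 + (1 + \<sigma>/4) *\<^sub>R e1"
proof -
  interpret skew_operator g F
    using assms(1,3) unfolding lorentzian_metric_def by unfold_locales auto
  obtain b0 b1 b2 where "orthonormal_frame g b0 b1 b2"
    using assms(1) unfolding lorentzian_metric_def by blast
  then obtain f0 f1 f2 t r where f: "orthonormal_frame g f0 f1 f2" "components f0 f1 f2 = (0, t, r)"
    and "t + r \<noteq> 0"
    using exists_frame_first_component_0 assms(4) by blast
  define \<sigma> where "\<sigma> = - (1/2) * trace_map (F \<circ> F)"
  have "\<sigma> = r\<^sup>2 - t\<^sup>2"
    unfolding \<sigma>_def trace_map_square[OF f] by (simp add: algebra_simps)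
  then obtain e0 e1 e2 where "orthonormal_frame g e0 e1 e2"
    "components e0 e1 e2 = (0, -1 + \<sigma> / 4, - (1 + \<sigma> / 4))"
    using exists_frame_components_normal_form[OF f \<open>t + r \<noteq> 0\<close>] by blast
  then obtain e0' e1' e2' where frame: "orthonormal_frame g e0' e1' e2'" "future_directed g tau e0'"
    and components: "components e0' e1' e2' = (0, -1 + \<sigma> / 4, - (1 + \<sigma> / 4))"
    using exists_future_directed_frame assms(2) by metis
  then have "F e0' = (-1 + \<sigma>/4) *\<^sub>R e2'" "F e1' = - ((1 + \<sigma>/4) *\<^sub>R e2')"
    "F e2' = (-1 + \<sigma>/4) *\<^sub>R e0' + (1 + \<sigma>/4) *\<^sub>R e1'"
    using apply_frame[OF frame(1) components] by (simp_all add: algebra_simps)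
  with frame show ?thesis
    unfolding Let_def \<sigma>_def[symmetric] by blast
qed

end
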